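(* Let $\mathcal{M}$ be a finite irreducible Markov chain with state set $S$ and reward function $r:S\to\{-1,0,1\}$, and let $\emptyset\ne R\subseteq S$. For $u\in R$ let $\mu_u=\mathbb{E}_u\big[\sum_{i=0}^{T_R-1}r(w(i))\big]$ where $T_R(w)=\min\{i\ge1\mid w(i)\in R\}$ (the expected reward accumulated from a visit to $u$, inclusive, up to the next visit to $R$, exclusive). Let $t\in R$. If $\mu_u>0$ for all $u\in R$, then $\mathbb{P}_t(\mathrm{LimInf}(=+\infty))=1$. If $\mu_u\le0$ for all $u\in R$, then $\mathbb{P}_t(\mathrm{LimInf}(=+\infty))=0$.
   Context: $\mathbb{P}_t$, $\mathbb{E}_t$ denote probability and expectation over runs of $\mathcal{M}$ starting in $t$. $\mathrm{LimInf}(=+\infty)=\{w\mid\liminf_{n}\sum_{i=0}^n r(w(i))=+\infty\}$. *)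

theory Defs
  imports "HOL-Probability.Probability"
begin

(* The law of its runs is realised by the random-mapping representation: an i.i.d. sequence of
   random "next-state tables" xi_n :: 's => 's, with the xi_n(s) (s in S) independent and
   xi_n(s) distributed as K s. *)

definition tables :: "('s \<Rightarrow> 's pmf) \<Rightarrow> ('s \<Rightarrow> 's) measure" where
  "tables K = PiM UNIV (\<lambda>s. measure_pmf (K s))"

definition noise :: "('s \<Rightarrow> 's pmf) \<Rightarrow> ('s \<Rightarrow> 's) stream measure" where
  "noise K = stream_space (tables K)"

fun run :: "'s \<Rightarrow> ('s \<Rightarrow> 's) stream \<Rightarrow> nat \<Rightarrow> 's" where
  "run t \<omega> 0 = t"
| "run t \<omega> (Suc n) = run (shd \<omega> t) (stl \<omega>) n"

definition Prob_from :: "('s \<Rightarrow> 's pmf) \<Rightarrow> 's \<Rightarrow> (nat \<Rightarrow> 's) set \<Rightarrow> real" where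
  "Prob_from K t A = measure (noise K) {\<omega> \<in> space (noise K). run t \<omega> \<in> A}"

definition Exp_from :: "('s \<Rightarrow> 's pmf) \<Rightarrow> 's \<Rightarrow> ((nat \<Rightarrow> 's) \<Rightarrow> real) \<Rightarrow> real" where
  "Exp_from K t f = (\<integral>\<omega>. f (run t \<omega>) \<partial>noise K)"

definition irreducible :: "('s \<Rightarrow> 's pmf) \<Rightarrow> bool" where
  "irreducible K \<longleftrightarrow> (\<forall>s s'. (s, s') \<in> {(x, y). y \<in> set_pmf (K x)}\<^sup>*)"

definition return_time :: "'s set \<Rightarrow> (nat \<Rightarrow> 's) \<Rightarrow> nat" where
  "return_time R w = (LEAST i. 1 \<le> i \<and> w i \<in> R)"

definition mu :: "('s \<Rightarrow> 's pmf) \<Rightarrow> ('s \<Rightarrow> int) \<Rightarrow> 's set \<Rightarrow> 's \<Rightarrow> real" where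
  "mu K r R u = Exp_from K u (\<lambda>w. real_of_int (\<Sum>i<return_time R w. r (w i)))"

definition LimInf_infty :: "('s \<Rightarrow> int) \<Rightarrow> (nat \<Rightarrow> 's) set" where
  "LimInf_infty r = {w. liminf (\<lambda>n. ereal (real_of_int (\<Sum>i\<le>n. r (w i)))) = \<infinity>}"

end

theory Submission
  imports Defs
begin

(* Let h(x) be the expected reward collected by the run from x before it first visits R
   (so h = 0 on R).  A first-step analysis shows that h is a potential whose drift
       r(x) + (P h)(x) - h(x)
   equals mu_x on R and 0 off R (lemma potential_drift); here P is the transition operator.

   - If every mu_u <= 0, the drift is <= 0, so S_n + h(w n) is a supermartingale (S_n the
     partial reward sums).  Stopped when S_n drops below a level -a, it is bounded below, and
     Fatou's lemma shows that it cannot tend to +infinity.  A run with S_n -> +infinity has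
     partial sums bounded below by some -a, so divergence has probability 0.
   - If every mu_u > 0, subtracting a small multiple of the expected hitting time of R from h
     gives a potential phi with drift >= delta > 0 everywhere.  For small l > 0 the process
     exp(-l (S_n + phi(w n))) then has geometrically decreasing expectation, so it is almost
     surely summable, which forces S_n -> +infinity almost surely. *)

abbreviation path_space :: "(nat \<Rightarrow> 's) measure" where
  "path_space \<equiv> PiM UNIV (\<lambda>_. count_space UNIV)"

abbreviation step_mean :: "('s \<Rightarrow> 's pmf) \<Rightarrow> ('s \<Rightarrow> real) \<Rightarrow> 's \<Rightarrow> real" where
  "step_mean K f x \<equiv> \<Sum>y\<in>UNIV. pmf (K x) y * f y"

lemma sum_pmf_UNIV: "(\<Sum>y\<in>UNIV. pmf (p :: 's::finite pmf) y) = 1"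
  by (rule sum_pmf_eq_1) auto

lemma sum_pmf_UNIV_ennreal: "(\<Sum>y\<in>UNIV. ennreal (pmf (p :: 's::finite pmf) y)) = 1"
  by (subst sum_ennreal) (auto simp: sum_pmf_UNIV)

lemma step_mean_add_const: "step_mean (K :: 's::finite \<Rightarrow> 's pmf) (\<lambda>y. c + f y) x = c + step_mean K f x"
  by (simp add: distrib_left sum.distrib sum_distrib_right[symmetric] sum_pmf_UNIV)

lemma step_mean_diff_cmult:
  "step_mean K (\<lambda>y. f y - c * g y) x = step_mean K f x - c * step_mean K g x"
  by (simp add: right_diff_distrib sum_subtractf sum_distrib_left mult.left_commute)

lemma step_mean_nonneg: "(\<And>y. 0 \<le> f y) \<Longrightarrow> 0 \<le> step_mean K f x"
  by (auto intro!: sum_nonneg)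

lemma ennreal_step_mean:
  assumes "\<And>y. 0 \<le> f y"
  shows "ennreal (step_mean K f x) = (\<Sum>y\<in>UNIV. ennreal (pmf (K x) y) * ennreal (f y))"
  using assms by (subst sum_ennreal[symmetric]) (auto simp: ennreal_mult)

lemma step_mean_ennreal_add_const:
  "(\<Sum>y\<in>UNIV. ennreal (pmf (p :: 's::finite pmf) y) * (c + h y))
     = c + (\<Sum>y\<in>UNIV. ennreal (pmf p y) * h y)"
proof -
  have "(\<Sum>y\<in>UNIV. ennreal (pmf p y) * (c + h y))
      = (\<Sum>y\<in>UNIV. ennreal (pmf p y) * c) + (\<Sum>y\<in>UNIV. ennreal (pmf p y) * h y)"
    by (simp add: distrib_left sum.distrib)
  also have "(\<Sum>y\<in>UNIV. ennreal (pmf p y) * c) = (\<Sum>y\<in>UNIV. ennreal (pmf p y)) * c"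
    by (rule sum_distrib_right[symmetric])
  finally show ?thesis by (simp add: sum_pmf_UNIV_ennreal)
qed

lemma finite_abs_bound: "\<exists>C. \<forall>x. \<bar>(f :: 's::finite \<Rightarrow> real) x\<bar> \<le> C"
  by (rule exI[of _ "Max (range (\<lambda>x. \<bar>f x\<bar>))"]) auto

context fixes K :: "'s::finite \<Rightarrow> 's pmf" begin

lemma prob_space_tables: "prob_space (tables K)"
  unfolding tables_def by (intro prob_space_PiM) (auto intro: prob_space_measure_pmf)

lemma prob_space_noise: "prob_space (noise K)"
  unfolding noise_def using prob_space.prob_space_stream_space[OF prob_space_tables] .

lemma measurable_table_eval: "(\<lambda>x. x t) \<in> tables K \<rightarrow>\<^sub>M count_space UNIV"
proof -
  have "(\<lambda>x. x t) \<in> tables K \<rightarrow>\<^sub>M measure_pmf (K t)"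
    unfolding tables_def by (rule measurable_component_singleton) simp
  then show ?thesis by (simp add: measurable_def tables_def space_PiM)
qed

lemma measurable_run_at: "(\<lambda>\<omega>. run t \<omega> n) \<in> noise K \<rightarrow>\<^sub>M count_space UNIV"
proof (induction n arbitrary: t)
  case (Suc n)
  have head: "(\<lambda>\<omega>. shd \<omega> t) \<in> noise K \<rightarrow>\<^sub>M count_space UNIV"
    unfolding noise_def using measurable_shd measurable_table_eval by (rule measurable_compose)
  have tail: "(\<lambda>\<omega>. run s (stl \<omega>) n) \<in> noise K \<rightarrow>\<^sub>M count_space UNIV" for s
    using measurable_compose[OF measurable_stl Suc[of s, unfolded noise_def]]
    unfolding noise_def .
  have "(\<lambda>\<omega>. run (shd \<omega> t) (stl \<omega>) n) \<in> noise K \<rightarrow>\<^sub>M count_space UNIV"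
    by (rule measurable_compose_countable'[where I=UNIV, OF tail head]) simp
  then show ?case by simp
qed simp

lemma measurable_run: "run t \<in> noise K \<rightarrow>\<^sub>M path_space"
  by (rule measurable_PiM_single') (auto intro: measurable_run_at)

lemma run_scons: "run t (x ## X) = case_nat t (run (x t) X)"
  by (rule ext) (simp split: nat.split)

(* Markov property at time 1: a run from t is t followed by an independent run from a
   K t-distributed successor. *)
lemma nn_integral_run_first_step:
  assumes f: "f \<in> borel_measurable path_space"
  shows "(\<integral>\<^sup>+\<omega>. f (run t \<omega>) \<partial>noise K) =
     (\<Sum>s\<in>UNIV. ennreal (pmf (K t) s) * (\<integral>\<^sup>+\<omega>. f (case_nat t (run s \<omega>)) \<partial>noise K))"
proof -
  interpret T: prob_space "tables K" by (rule prob_space_tables)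
  interpret P: product_prob_space "\<lambda>s. measure_pmf (K s)" UNIV
    by unfold_locales (auto intro: prob_space_measure_pmf)
  have fr: "(\<lambda>\<omega>. f (run t \<omega>)) \<in> borel_measurable (stream_space (tables K))"
    using measurable_compose[OF measurable_run f] unfolding noise_def .
  define H where "H s = (\<integral>\<^sup>+\<omega>. f (case_nat t (run s \<omega>)) \<partial>noise K)" for s
  have "(\<integral>\<^sup>+\<omega>. f (run t \<omega>) \<partial>noise K)
      = (\<integral>\<^sup>+x. (\<integral>\<^sup>+X. f (run t (x ## X)) \<partial>noise K) \<partial>tables K)"
    unfolding noise_def by (rule T.nn_integral_stream_space[OF fr])
  also have "\<dots> = (\<integral>\<^sup>+x. H (x t) \<partial>tables K)"
    by (simp add: run_scons H_def)
  also have "\<dots> = (\<integral>\<^sup>+s. H s \<partial>distr (tables K) (measure_pmf (K t)) (\<lambda>x. x t))"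
    by (subst nn_integral_distr) (auto simp: tables_def intro: measurable_component_singleton)
  also have "distr (tables K) (measure_pmf (K t)) (\<lambda>x. x t) = measure_pmf (K t)"
    unfolding tables_def by (rule P.PiM_component) simp
  also have "(\<integral>\<^sup>+s. H s \<partial>measure_pmf (K t)) = (\<Sum>s\<in>UNIV. ennreal (pmf (K t) s) * H s)"
    by (simp add: nn_integral_measure_pmf, subst nn_integral_count_space_finite) auto
  finally show ?thesis unfolding H_def .
qed

definition nn_exp :: "'s \<Rightarrow> ((nat \<Rightarrow> 's) \<Rightarrow> ennreal) \<Rightarrow> ennreal" where
  "nn_exp x f = (\<integral>\<^sup>+\<omega>. f (run x \<omega>) \<partial>noise K)"

lemma nn_exp_first_step: "f \<in> borel_measurable path_space \<Longrightarrow>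
   nn_exp x f = (\<Sum>s\<in>UNIV. ennreal (pmf (K x) s) * nn_exp s (\<lambda>w. f (case_nat x w)))"
  unfolding nn_exp_def by (rule nn_integral_run_first_step)

lemma nn_exp_const [simp]: "nn_exp x (\<lambda>_. c) = c"
proof -
  interpret prob_space "noise K" by (rule prob_space_noise)
  show ?thesis unfolding nn_exp_def by (simp add: emeasure_space_1)
qed

lemma nn_exp_cmult: "f \<in> borel_measurable path_space \<Longrightarrow> nn_exp x (\<lambda>w. c * f w) = c * nn_exp x f"
  unfolding nn_exp_def by (rule nn_integral_cmult) (rule measurable_compose[OF measurable_run])

lemma nn_exp_add: "f \<in> borel_measurable path_space \<Longrightarrow> g \<in> borel_measurable path_space \<Longrightarrow>
    nn_exp x (\<lambda>w. f w + g w) = nn_exp x f + nn_exp x g"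
  unfolding nn_exp_def by (rule nn_integral_add) (auto intro: measurable_compose[OF measurable_run])

lemma nn_exp_mono: "(\<And>w. f w \<le> g w) \<Longrightarrow> nn_exp x f \<le> nn_exp x g"
  unfolding nn_exp_def by (rule nn_integral_mono) auto

lemma nn_exp_suminf: "(\<And>i. f i \<in> borel_measurable path_space) \<Longrightarrow>
    nn_exp x (\<lambda>w. \<Sum>i. f i w) = (\<Sum>i. nn_exp x (f i))"
  unfolding nn_exp_def by (rule nn_integral_suminf) (auto intro: measurable_compose[OF measurable_run])

lemma AE_finite_of_nn_exp:
  "f \<in> borel_measurable path_space \<Longrightarrow> nn_exp x f \<noteq> \<infinity> \<Longrightarrow> AE \<omega> in noise K. f (run x \<omega>) \<noteq> \<infinity>"
  unfolding nn_exp_def by (rule nn_integral_PInf_AE) (rule measurable_compose[OF measurable_run])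

end

lemma measurable_path_coord: "(\<lambda>w. w i) \<in> (path_space :: (nat \<Rightarrow> 's) measure) \<rightarrow>\<^sub>M count_space UNIV"
  by (rule measurable_component_singleton) simp

lemma measurable_path_state_fun:
  "F \<in> UNIV \<rightarrow> space M \<Longrightarrow> (\<lambda>w. (F :: 's::finite \<Rightarrow> _) (w i)) \<in> path_space \<rightarrow>\<^sub>M M"
  by (rule measurable_compose[OF measurable_path_coord]) (simp add: measurable_count_space_eq1)

lemma measurable_path_real [measurable]:
  "(\<lambda>w. (F :: 's::finite \<Rightarrow> real) (w i)) \<in> borel_measurable path_space"
  by (rule measurable_path_state_fun) simp

lemma measurable_path_shift: "(\<lambda>w i. w (Suc i)) \<in> (path_space :: (nat \<Rightarrow> 's) measure) \<rightarrow>\<^sub>M path_space"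
  by (rule measurable_PiM_single') (auto intro: measurable_path_coord)

lemma pred_avoids [measurable]:
  "Measurable.pred (path_space :: (nat \<Rightarrow> 's::finite) measure) (\<lambda>w. \<forall>i<n. w i \<notin> A)"
proof (rule pred_intros_countable)
  fix i
  have "Measurable.pred (path_space :: (nat \<Rightarrow> 's) measure) (\<lambda>w. w i \<notin> A)"
    by (rule measurable_path_state_fun) simp
  then show "Measurable.pred (path_space :: (nat \<Rightarrow> 's) measure) (\<lambda>w. i < n \<longrightarrow> w i \<notin> A)"
    by (cases "i < n") simp_all
qed

lemma pred_avoids_after [measurable]:
  "Measurable.pred (path_space :: (nat \<Rightarrow> 's::finite) measure) (\<lambda>w. \<forall>i<n. w (Suc i) \<notin> A)"
proof (rule pred_intros_countable)
  fix i
  have "Measurable.pred (path_space :: (nat \<Rightarrow> 's) measure) (\<lambda>w. w (Suc i) \<notin> A)"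
    by (rule measurable_path_state_fun) simp
  then show "Measurable.pred (path_space :: (nat \<Rightarrow> 's) measure) (\<lambda>w. i < n \<longrightarrow> w (Suc i) \<notin> A)"
    by (cases "i < n") simp_all
qed

lemma all_less_Suc_case_nat: "(\<forall>i<Suc n. case_nat x w i \<notin> A) \<longleftrightarrow> x \<notin> A \<and> (\<forall>i<n. w i \<notin> A)"
  by (simp add: All_less_Suc2)

context fixes K :: "'s::finite \<Rightarrow> 's pmf" and R :: "'s set" begin

(* avoid_prob n x: probability that the run from x stays outside R at times 0, ..., n-1. *)
fun avoid_prob :: "nat \<Rightarrow> 's \<Rightarrow> real" where
  "avoid_prob 0 x = 1"
| "avoid_prob (Suc n) x = (if x \<in> R then 0 else step_mean K (avoid_prob n) x)"

lemma avoid_prob_nonneg: "0 \<le> avoid_prob n x"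
  by (induction n arbitrary: x) (auto intro!: sum_nonneg)

lemma avoid_prob_le_1: "avoid_prob n x \<le> 1"
proof (induction n arbitrary: x)
  case (Suc n)
  have "step_mean K (avoid_prob n) x \<le> step_mean K (\<lambda>_. 1) x"
    by (intro sum_mono mult_left_mono Suc) auto
  then show ?case by (simp add: sum_pmf_UNIV)
qed simp

lemma avoid_prob_Suc_le: "avoid_prob (Suc n) x \<le> avoid_prob n x"
proof (induction n arbitrary: x)
  case 0 then show ?case using avoid_prob_le_1[of 1 x] by simp
next
  case (Suc n)
  have "step_mean K (avoid_prob (Suc n)) x \<le> step_mean K (avoid_prob n) x"
    by (intro sum_mono mult_left_mono Suc) auto
  then show ?case by simp
qed

lemma avoid_prob_antimono: "n \<le> m \<Longrightarrow> avoid_prob m x \<le> avoid_prob n x"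
proof (induction m rule: dec_induct)
  case (step m)
  then show ?case using avoid_prob_Suc_le[of m x] by linarith
qed simp

lemma nn_exp_avoid: "nn_exp K x (\<lambda>w. if \<forall>i<n. w i \<notin> R then 1 else 0) = ennreal (avoid_prob n x)"
proof (induction n arbitrary: x)
  case (Suc n)
  have m: "(\<lambda>w. if \<forall>i<Suc n. w i \<notin> R then 1 else (0::ennreal)) \<in> borel_measurable path_space"
    by measurable
  have shifted: "(\<lambda>w. if \<forall>i<Suc n. case_nat x w i \<notin> R then 1 else (0::ennreal)) =
       (\<lambda>w. if x \<in> R then 0 else if \<forall>i<n. w i \<notin> R then 1 else 0)"
    by (simp only: all_less_Suc_case_nat) auto
  have "nn_exp K x (\<lambda>w. if \<forall>i<Suc n. w i \<notin> R then 1 else 0) =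
     (\<Sum>s\<in>UNIV. ennreal (pmf (K x) s) * (if x \<in> R then 0 else ennreal (avoid_prob n s)))"
    using Suc by (cases "x \<in> R") (simp_all add: nn_exp_first_step[OF m] shifted del: avoid_prob.simps)
  also have "\<dots> = ennreal (avoid_prob (Suc n) x)"
    by (cases "x \<in> R") (simp_all add: ennreal_step_mean avoid_prob_nonneg)
  finally show ?case .
qed simp

definition avoid_max :: "nat \<Rightarrow> real" where
  "avoid_max n = Max (range (avoid_prob n))"

lemma avoid_prob_le_max: "avoid_prob n x \<le> avoid_max n"
  unfolding avoid_max_def by (rule Max_ge) auto

lemma avoid_max_nonneg: "0 \<le> avoid_max n"
  using avoid_prob_le_max[of n undefined] avoid_prob_nonneg[of n undefined] by linarith

(* Splitting an (n+m)-step avoidance after m steps; the remaining n steps are bounded by the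
   worst case over the intermediate state. *)
lemma avoid_prob_add: "avoid_prob (n + m) x \<le> avoid_max n * avoid_prob m x"
proof (induction m arbitrary: x)
  case 0 then show ?case using avoid_prob_le_max[of n x] by simp
next
  case (Suc m)
  have "step_mean K (avoid_prob (n + m)) x \<le> step_mean K (\<lambda>s. avoid_max n * avoid_prob m s) x"
    by (intro sum_mono mult_left_mono Suc) auto
  then show ?case by (simp add: sum_distrib_left algebra_simps)
qed

lemma avoid_max_add: "avoid_max (n + m) \<le> avoid_max n * avoid_max m"
proof -
  have "avoid_prob (n + m) x \<le> avoid_max n * avoid_max m" for x
    using avoid_prob_add[of n m x] avoid_prob_le_max[of m x] avoid_max_nonneg[of n]
    by (meson mult_left_mono order_trans)
  then show ?thesis unfolding avoid_max_def[of "n + m"] by (subst Max_le_iff) auto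
qed

lemma avoid_max_mult: "avoid_max (j * N) \<le> avoid_max N ^ j"
proof (induction j)
  case 0 then show ?case by (simp add: avoid_max_def)
next
  case (Suc j)
  have "avoid_max (N + j * N) \<le> avoid_max N * avoid_max (j * N)" by (rule avoid_max_add)
  also have "\<dots> \<le> avoid_max N * avoid_max N ^ j" by (intro mult_left_mono Suc avoid_max_nonneg)
  finally show ?case by (simp add: add.commute)
qed

end

context fixes K :: "'s::finite \<Rightarrow> 's pmf" and R :: "'s set"
  assumes irr: "irreducible K" and R_nonempty: "R \<noteq> {}"
begin

(* By irreducibility R is reachable from every state, so some avoidance probability is < 1. *)
lemma avoid_prob_less_1: "\<exists>k. avoid_prob K R k x < 1"
proof -
  obtain z where z: "z \<in> R" using R_nonempty by auto
  have "(x, z) \<in> {(a, b). b \<in> set_pmf (K a)}\<^sup>*" using irr unfolding irreducible_def by blast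
  then show ?thesis
  proof (induction rule: converse_rtrancl_induct)
    case base
    show ?case by (rule exI[of _ 1]) (simp add: z)
  next
    case (step y y')
    from step.IH obtain k where k: "avoid_prob K R k y' < 1" by blast
    have py: "0 < pmf (K y) y'" using step.hyps(1) by (simp add: pmf_positive)
    have "step_mean K (avoid_prob K R k) y < step_mean K (\<lambda>_. 1) y"
    proof (rule sum_strict_mono_ex1)
      show "\<forall>s\<in>UNIV. pmf (K y) s * avoid_prob K R k s \<le> pmf (K y) s * 1"
        by (simp add: mult_left_le avoid_prob_le_1)
      show "\<exists>s\<in>UNIV. pmf (K y) s * avoid_prob K R k s < pmf (K y) s * 1"
        using k py by (intro bexI[of _ y']) auto
    qed simp
    then show ?case by (intro exI[of _ "Suc k"]) (simp add: sum_pmf_UNIV)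
  qed
qed

lemma avoid_max_less_1: "\<exists>N. 0 < N \<and> avoid_max K R N < 1"
proof -
  obtain f where f: "\<And>x. avoid_prob K R (f x) x < 1" using avoid_prob_less_1 by metis
  define N where "N = Max (range f)"
  have N_lt: "avoid_prob K R N x < 1" for x
    using avoid_prob_antimono[of "f x" N K R x] f[of x] unfolding N_def
    by (meson Max_ge finite rangeI finite_imageI order.strict_trans1)
  then have "avoid_max K R N < 1" unfolding avoid_max_def by (subst Max_less_iff) auto
  moreover have "N \<noteq> 0" using N_lt[of undefined] by (cases N) auto
  ultimately show ?thesis by blast
qed

lemma avoid_prob_geometric: "\<exists>C b. 0 < b \<and> b < 1 \<and> (\<forall>n x. avoid_prob K R n x \<le> C * b ^ n)"
proof -
  obtain N where N: "0 < N" "avoid_max K R N < 1" using avoid_max_less_1 by blast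
  define a where "a = max (avoid_max K R N) (1/2)"
  have a: "0 < a" "a < 1" "avoid_max K R N \<le> a" using N by (auto simp: a_def)
  define b where "b = root N a"
  have b: "0 < b" "b < 1" using a N by (auto simp: b_def)
  have bN: "b ^ N = a" using a N by (simp add: b_def)
  have "avoid_prob K R n x \<le> (1/a) * b ^ n" for n x
  proof -
    have "n \<le> N * (n div N) + N"
      using N(1) by (metis add_le_cancel_left div_mult_mod_eq less_imp_le mod_less_divisor mult.commute)
    have "avoid_prob K R n x \<le> avoid_prob K R ((n div N) * N) x"
      by (rule avoid_prob_antimono) (simp add: div_times_less_eq_dividend)
    also have "\<dots> \<le> avoid_max K R ((n div N) * N)" by (rule avoid_prob_le_max)
    also have "\<dots> \<le> avoid_max K R N ^ (n div N)" by (rule avoid_max_mult)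
    also have "\<dots> \<le> a ^ (n div N)" using a by (intro power_mono) (auto simp: avoid_max_nonneg)
    also have "\<dots> = (1/a) * b ^ (N * (n div N) + N)"
      using a by (simp add: power_add power_mult bN)
    also have "\<dots> \<le> (1/a) * b ^ n"
      using a b \<open>n \<le> N * (n div N) + N\<close> by (intro mult_left_mono power_decreasing) auto
    finally show ?thesis .
  qed
  then show ?thesis using b by blast
qed

lemma avoid_prob_suminf_finite: "(\<Sum>n. ennreal (avoid_prob K R (Suc n) x)) < \<infinity>"
proof -
  obtain C b where Cb: "0 < b" "b < 1" "\<And>n x. avoid_prob K R n x \<le> C * b ^ n"
    using avoid_prob_geometric by blast
  have "summable (\<lambda>n. avoid_prob K R n x)"
  proof (rule summable_comparison_test'[where g="\<lambda>n. C * b ^ n" and N=0])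
    show "summable (\<lambda>n. C * b ^ n)" using Cb by (intro summable_mult summable_geometric) auto
    show "norm (avoid_prob K R n x) \<le> C * b ^ n" for n
      using Cb(3)[of n x] avoid_prob_nonneg[of K R n x] by simp
  qed
  then have "summable (\<lambda>n. avoid_prob K R (Suc n) x)" by (subst summable_Suc_iff)
  then show ?thesis
    by (subst suminf_ennreal2) (auto simp del: avoid_prob.simps simp: avoid_prob_nonneg)
qed

end

(* Weight v accumulated by a path before its first visit to R (time 0 included in the check). *)
definition weight_before :: "'s set \<Rightarrow> ('s \<Rightarrow> real) \<Rightarrow> (nat \<Rightarrow> 's) \<Rightarrow> ennreal" where
  "weight_before R v w = (\<Sum>n. if \<forall>i<Suc n. w i \<notin> R then ennreal (v (w n)) else 0)"

(* Weight v accumulated by a path from time 0 up to its first return to R at a time >= 1. *)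
definition excursion_weight :: "'s set \<Rightarrow> ('s \<Rightarrow> real) \<Rightarrow> (nat \<Rightarrow> 's) \<Rightarrow> ennreal" where
  "excursion_weight R v w = (\<Sum>n. if \<forall>i<n. w (Suc i) \<notin> R then ennreal (v (w n)) else 0)"

lemma measurable_weight_before [measurable]:
  "weight_before R v \<in> borel_measurable (path_space :: (nat \<Rightarrow> 's::finite) measure)"
  unfolding weight_before_def by measurable

lemma measurable_excursion_weight [measurable]:
  "excursion_weight R v \<in> borel_measurable (path_space :: (nat \<Rightarrow> 's::finite) measure)"
  unfolding excursion_weight_def by measurable

lemma weight_before_case_nat:
  "weight_before R v (case_nat x w) = (if x \<in> R then 0 else ennreal (v x) + weight_before R v w)"
proof -
  define f where
    "f = (\<lambda>n. if \<forall>i<Suc n. case_nat x w i \<notin> R then ennreal (v (case_nat x w n)) else 0)"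
  have "suminf f = (\<Sum>j. f (j + 1)) + (\<Sum>j<1. f j)" by (rule suminf_offset) simp
  moreover have "f (j + 1) = (if x \<in> R then 0 else
      (if \<forall>i<Suc j. w i \<notin> R then ennreal (v (w j)) else 0))" for j
    unfolding f_def by (simp only: Suc_eq_plus1[symmetric] all_less_Suc_case_nat) auto
  moreover have "f 0 = (if x \<in> R then 0 else ennreal (v x))" unfolding f_def by simp
  ultimately show ?thesis unfolding weight_before_def f_def[symmetric]
    by (cases "x \<in> R") (simp_all add: add.commute)
qed

lemma excursion_weight_case_nat:
  "excursion_weight R v (case_nat x w) = ennreal (v x) + weight_before R v w"
proof -
  define f where
    "f = (\<lambda>n. if \<forall>i<n. case_nat x w (Suc i) \<notin> R then ennreal (v (case_nat x w n)) else 0)"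
  have "suminf f = (\<Sum>j. f (j + 1)) + (\<Sum>j<1. f j)" by (rule suminf_offset) simp
  moreover have "f (j + 1) = (if \<forall>i<Suc j. w i \<notin> R then ennreal (v (w j)) else 0)" for j
    unfolding f_def by auto
  moreover have "f 0 = ennreal (v x)" unfolding f_def by simp
  ultimately show ?thesis unfolding weight_before_def excursion_weight_def f_def[symmetric]
    by (simp add: add.commute)
qed

lemma returns_of_excursion_length_finite:
  assumes "excursion_weight R (\<lambda>_. 1) w \<noteq> \<infinity>"
  shows "\<exists>n. 1 \<le> n \<and> w n \<in> R"
proof (rule ccontr)
  assume "\<not> ?thesis"
  then have "excursion_weight R (\<lambda>_. 1) w = (\<Sum>n. 1)" unfolding excursion_weight_def by auto
  also have "(\<Sum>n. 1) = (\<infinity> :: ennreal)"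
    by (simp add: suminf_eq_SUP ennreal_SUP_of_nat_eq_top)
  finally show False using assms by simp
qed

lemma excursion_weight_eq_sum:
  assumes hit: "\<exists>n. 1 \<le> n \<and> w n \<in> R"
  shows "excursion_weight R v w = (\<Sum>n<return_time R w. ennreal (v (w n)))"
proof -
  define \<tau> where "\<tau> = return_time R w"
  have \<tau>: "1 \<le> \<tau> \<and> w \<tau> \<in> R" unfolding \<tau>_def return_time_def using hit by (rule LeastI_ex)
  have before: "\<And>i. 1 \<le> i \<Longrightarrow> i < \<tau> \<Longrightarrow> w i \<notin> R"
    unfolding \<tau>_def return_time_def using not_less_Least by blast
  have "excursion_weight R v w
      = (\<Sum>n\<in>{..<\<tau>}. if \<forall>i<n. w (Suc i) \<notin> R then ennreal (v (w n)) else 0)"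
    unfolding excursion_weight_def
  proof (rule suminf_finite)
    fix n assume "n \<notin> {..<\<tau>}"
    then have "\<tau> - 1 < n" "Suc (\<tau> - 1) = \<tau>" using \<tau> by auto
    then show "(if \<forall>i<n. w (Suc i) \<notin> R then ennreal (v (w n)) else 0) = 0"
      using \<tau> by (metis (full_types))
  qed simp
  also have "\<dots> = (\<Sum>n<\<tau>. ennreal (v (w n)))"
    using before by (intro sum.cong) auto
  finally show ?thesis unfolding \<tau>_def .
qed

lemma measurable_return_time:
  "return_time R \<in> (path_space :: (nat \<Rightarrow> 's::finite) measure) \<rightarrow>\<^sub>M count_space UNIV"
proof -
  have [measurable]: "\<And>i. Measurable.pred (path_space :: (nat \<Rightarrow> 's) measure) (\<lambda>w. w i \<in> R)"
    by (rule measurable_path_state_fun) simp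
  show ?thesis unfolding return_time_def[abs_def] by measurable
qed

lemma measurable_excursion_reward:
  "(\<lambda>w. real_of_int (\<Sum>i<return_time R w. (r :: 's::finite \<Rightarrow> int) (w i)))
     \<in> borel_measurable (path_space :: (nat \<Rightarrow> 's) measure)"
proof -
  have "(\<lambda>w. (\<lambda>k w. \<Sum>i<k. real_of_int (r (w i))) (return_time R w) w)
      \<in> borel_measurable (path_space :: (nat \<Rightarrow> 's) measure)"
    by (rule measurable_compose_countable'[OF _ measurable_return_time]) auto
  then show ?thesis by simp
qed

context fixes K :: "'s::finite \<Rightarrow> 's pmf" begin

lemma nn_exp_weight_before_step:
  "nn_exp K x (weight_before R v) = (if x \<in> R then 0
     else ennreal (v x) + (\<Sum>s\<in>UNIV. ennreal (pmf (K x) s) * nn_exp K s (weight_before R v)))"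
proof -
  have "nn_exp K s (\<lambda>w. weight_before R v (case_nat x w))
      = (if x \<in> R then 0 else ennreal (v x) + nn_exp K s (weight_before R v))" for s
    by (cases "x \<in> R") (simp_all add: weight_before_case_nat nn_exp_add)
  then show ?thesis
    by (cases "x \<in> R")
       (simp_all add: nn_exp_first_step[OF measurable_weight_before] step_mean_ennreal_add_const)
qed

lemma nn_exp_excursion_weight_step:
  "nn_exp K x (excursion_weight R v)
     = ennreal (v x) + (\<Sum>s\<in>UNIV. ennreal (pmf (K x) s) * nn_exp K s (weight_before R v))"
  by (simp add: nn_exp_first_step[OF measurable_excursion_weight] excursion_weight_case_nat
      nn_exp_add step_mean_ennreal_add_const)

definition hitting_value :: "'s set \<Rightarrow> ('s \<Rightarrow> real) \<Rightarrow> 's \<Rightarrow> real" where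
  "hitting_value R v x = enn2real (nn_exp K x (weight_before R v))"

lemma hitting_value_nonneg: "0 \<le> hitting_value R v x"
  unfolding hitting_value_def by simp

end

context fixes K :: "'s::finite \<Rightarrow> 's pmf" and R :: "'s set"
  assumes irr: "irreducible K" and R_nonempty: "R \<noteq> {}"
begin

(* The time spent outside R has finite expectation, hence so does any bounded weight. *)
lemma nn_exp_weight_before_finite: "nn_exp K x (weight_before R v) < \<infinity>"
proof -
  obtain B where vB: "\<And>s. v s \<le> B" using finite_abs_bound[of v] by (meson abs_ge_self order_trans)
  have "nn_exp K x (weight_before R v)
      \<le> nn_exp K x (\<lambda>w. \<Sum>n. ennreal B * (if \<forall>i<Suc n. w i \<notin> R then 1 else 0))"
    unfolding weight_before_def by (intro nn_exp_mono suminf_le) (auto simp: vB ennreal_leI)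
  also have "\<dots> = (\<Sum>n. ennreal B * ennreal (avoid_prob K R (Suc n) x))"
    by (simp add: nn_exp_suminf nn_exp_cmult nn_exp_avoid del: avoid_prob.simps)
  also have "\<dots> = ennreal B * (\<Sum>n. ennreal (avoid_prob K R (Suc n) x))"
    by (rule ennreal_suminf_cmult)
  also have "\<dots> < \<infinity>"
    using avoid_prob_suminf_finite[OF irr R_nonempty] by (simp add: ennreal_mult_less_top)
  finally show ?thesis .
qed

lemma nn_exp_weight_before_eq: "nn_exp K x (weight_before R v) = ennreal (hitting_value K R v x)"
  unfolding hitting_value_def using nn_exp_weight_before_finite by simp

lemma hitting_value_step:
  assumes v: "\<And>s. 0 \<le> v s"
  shows "hitting_value K R v x = (if x \<in> R then 0 else v x + step_mean K (hitting_value K R v) x)"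
proof -
  have S: "0 \<le> step_mean K (hitting_value K R v) x" by (rule step_mean_nonneg) (rule hitting_value_nonneg)
  have "ennreal (hitting_value K R v x) = ennreal (if x \<in> R then 0 else v x + step_mean K (hitting_value K R v) x)"
    using nn_exp_weight_before_step[of K x R v] v S
    by (simp add: nn_exp_weight_before_eq ennreal_step_mean hitting_value_nonneg)
  then show ?thesis
    using v S by (subst (asm) ennreal_inj) (auto simp: hitting_value_nonneg)
qed

lemma nn_exp_excursion_weight_eq:
  assumes v: "\<And>s. 0 \<le> v s"
  shows "nn_exp K x (excursion_weight R v) = ennreal (v x + step_mean K (hitting_value K R v) x)"
proof -
  have "0 \<le> step_mean K (hitting_value K R v) x" by (rule step_mean_nonneg) (rule hitting_value_nonneg)
  then show ?thesis using v
    by (simp add: nn_exp_excursion_weight_step nn_exp_weight_before_eq ennreal_step_mean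
        hitting_value_nonneg)
qed

lemma AE_excursion_weight_finite:
  assumes v: "\<And>s. 0 \<le> v s"
  shows "AE \<omega> in noise K. excursion_weight R v (run x \<omega>) \<noteq> \<infinity>"
  by (rule AE_finite_of_nn_exp) (simp_all add: nn_exp_excursion_weight_eq v)

lemma AE_returns: "AE \<omega> in noise K. \<exists>n. 1 \<le> n \<and> run x \<omega> n \<in> R"
proof -
  have "AE \<omega> in noise K. excursion_weight R (\<lambda>_. 1) (run x \<omega>) \<noteq> \<infinity>"
    by (rule AE_excursion_weight_finite) simp
  then show ?thesis by eventually_elim (rule returns_of_excursion_length_finite)
qed

lemma integral_excursion_weight:
  assumes v: "\<And>s. 0 \<le> v s"
  shows "integrable (noise K) (\<lambda>\<omega>. enn2real (excursion_weight R v (run x \<omega>)))"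
    and "(\<integral>\<omega>. enn2real (excursion_weight R v (run x \<omega>)) \<partial>noise K)
           = v x + step_mean K (hitting_value K R v) x"
proof -
  have m: "(\<lambda>\<omega>. excursion_weight R v (run x \<omega>)) \<in> borel_measurable (noise K)"
    by (rule measurable_compose[OF measurable_run measurable_excursion_weight])
  then have m_real: "(\<lambda>\<omega>. enn2real (excursion_weight R v (run x \<omega>))) \<in> borel_measurable (noise K)"
    by measurable
  have S: "0 \<le> step_mean K (hitting_value K R v) x" by (rule step_mean_nonneg) (rule hitting_value_nonneg)
  have eq: "(\<integral>\<^sup>+\<omega>. ennreal (enn2real (excursion_weight R v (run x \<omega>))) \<partial>noise K)
      = nn_exp K x (excursion_weight R v)"
  proof -
    have "AE \<omega> in noise K. excursion_weight R v (run x \<omega>) \<noteq> \<infinity>"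
      using v by (rule AE_excursion_weight_finite)
    then show ?thesis unfolding nn_exp_def
      by (intro nn_integral_cong_AE) (auto simp: less_top[symmetric])
  qed
  show "integrable (noise K) (\<lambda>\<omega>. enn2real (excursion_weight R v (run x \<omega>)))"
    by (rule integrableI_nonneg[OF m_real]) (simp_all add: eq nn_exp_excursion_weight_eq v)
  show "(\<integral>\<omega>. enn2real (excursion_weight R v (run x \<omega>)) \<partial>noise K)
      = v x + step_mean K (hitting_value K R v) x"
    by (subst integral_eq_nn_integral[OF m_real])
       (use v S in \<open>simp_all add: eq nn_exp_excursion_weight_eq del: ennreal_plus\<close>)
qed

end

definition reward_pos :: "('s \<Rightarrow> int) \<Rightarrow> 's \<Rightarrow> real" where
  "reward_pos r s = real_of_int (max (r s) 0)"

definition reward_neg :: "('s \<Rightarrow> int) \<Rightarrow> 's \<Rightarrow> real" where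
  "reward_neg r s = real_of_int (max (- r s) 0)"

lemma reward_pos_nonneg: "0 \<le> reward_pos r s" and reward_neg_nonneg: "0 \<le> reward_neg r s"
  by (simp_all add: reward_pos_def reward_neg_def)

lemma reward_pos_minus_neg: "reward_pos r s - reward_neg r s = real_of_int (r s)"
  by (simp add: reward_pos_def reward_neg_def)

definition potential :: "('s::finite \<Rightarrow> 's pmf) \<Rightarrow> 's set \<Rightarrow> ('s \<Rightarrow> int) \<Rightarrow> 's \<Rightarrow> real" where
  "potential K R r x = hitting_value K R (reward_pos r) x - hitting_value K R (reward_neg r) x"

context fixes K :: "'s::finite \<Rightarrow> 's pmf" and R :: "'s set" and r :: "'s \<Rightarrow> int"
  assumes irr: "irreducible K" and R_nonempty: "R \<noteq> {}"
begin

lemma potential_step: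
  "potential K R r x = (if x \<in> R then 0 else real_of_int (r x) + step_mean K (potential K R r) x)"
  unfolding potential_def
  by (subst (1 2) hitting_value_step[OF irr R_nonempty])
     (auto simp: reward_pos_nonneg reward_neg_nonneg reward_pos_minus_neg[symmetric]
       sum_subtractf right_diff_distrib)

lemma mu_eq_potential: "mu K r R u = real_of_int (r u) + step_mean K (potential K R r) u"
proof -
  define G where "G v \<omega> = enn2real (excursion_weight R v (run u \<omega>))" for v \<omega>
  have measurable_G: "G v \<in> borel_measurable (noise K)" for v
    unfolding G_def using measurable_compose[OF measurable_run measurable_excursion_weight] by measurable
  have excursion_reward:
    "AE \<omega> in noise K. real_of_int (\<Sum>i<return_time R (run u \<omega>). r (run u \<omega> i))
        = G (reward_pos r) \<omega> - G (reward_neg r) \<omega>"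
    using AE_returns[OF irr R_nonempty, of u]
  proof eventually_elim
    case (elim \<omega>)
    have G_sum: "G v \<omega> = (\<Sum>n<return_time R (run u \<omega>). v (run u \<omega> n))" if "\<And>s. 0 \<le> v s" for v
      using that unfolding G_def by (simp add: excursion_weight_eq_sum[OF elim] sum_ennreal sum_nonneg)
    show ?case
      by (simp add: G_sum reward_pos_nonneg reward_neg_nonneg sum_subtractf[symmetric] reward_pos_minus_neg)
  qed
  have "mu K r R u = (\<integral>\<omega>. G (reward_pos r) \<omega> - G (reward_neg r) \<omega> \<partial>noise K)"
    unfolding mu_def Exp_from_def
    by (rule integral_cong_AE[OF measurable_compose[OF measurable_run measurable_excursion_reward]
          _ excursion_reward])
       (use measurable_G in measurable)
  also have "\<dots> = (\<integral>\<omega>. G (reward_pos r) \<omega> \<partial>noise K) - (\<integral>\<omega>. G (reward_neg r) \<omega> \<partial>noise K)"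
    unfolding G_def
    by (rule Bochner_Integration.integral_diff; rule integral_excursion_weight(1)[OF irr R_nonempty];
        simp add: reward_pos_nonneg reward_neg_nonneg)
  also have "\<dots> = real_of_int (r u) + step_mean K (potential K R r) u"
    unfolding G_def potential_def
    by (subst (1 2) integral_excursion_weight(2)[OF irr R_nonempty])
       (auto simp: reward_pos_nonneg reward_neg_nonneg reward_pos_minus_neg[symmetric]
         sum_subtractf right_diff_distrib)
  finally show ?thesis .
qed

lemma potential_drift:
  "real_of_int (r x) + step_mean K (potential K R r) x - potential K R r x
     = (if x \<in> R then mu K r R x else 0)"
  using potential_step[of x] mu_eq_potential[of x] by (cases "x \<in> R") simp_all

end

definition partial_reward :: "('s \<Rightarrow> int) \<Rightarrow> nat \<Rightarrow> (nat \<Rightarrow> 's) \<Rightarrow> real" where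
  "partial_reward r n w = (\<Sum>i<n. real_of_int (r (w i)))"

definition reward_diverges :: "('s \<Rightarrow> int) \<Rightarrow> (nat \<Rightarrow> 's) \<Rightarrow> bool" where
  "reward_diverges r w \<longleftrightarrow> (LIM n sequentially. partial_reward r n w :> at_top)"

lemma partial_reward_Suc: "partial_reward r (Suc n) w = real_of_int (r (w 0)) + partial_reward r n (\<lambda>i. w (Suc i))"
  unfolding partial_reward_def by (simp only: sum.lessThan_Suc_shift)

lemma partial_reward_Suc_case_nat: "partial_reward r (Suc n) (case_nat x w) = real_of_int (r x) + partial_reward r n w"
  by (simp add: partial_reward_Suc)

lemma partial_reward_lower:
  assumes "\<And>x. -1 \<le> r x"
  shows "- real n \<le> partial_reward r n w"
proof -
  have "(\<Sum>i<n. -1) \<le> partial_reward r n w"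
    unfolding partial_reward_def using assms by (intro sum_mono) (metis of_int_le_iff of_int_minus of_int_1)
  then show ?thesis by simp
qed

lemma measurable_partial_reward [measurable]:
  "partial_reward r n \<in> borel_measurable (path_space :: (nat \<Rightarrow> 's::finite) measure)"
  unfolding partial_reward_def[abs_def] by measurable

(* Divergence only needs to be checked against natural-number thresholds; hence it is an event. *)
lemma reward_diverges_nat:
  "reward_diverges r w \<longleftrightarrow> (\<forall>A::nat. \<exists>N. \<forall>n\<ge>N. real A < partial_reward r n w)"
  unfolding reward_diverges_def filterlim_at_top_dense eventually_sequentially
proof (intro iffI allI)
  fix A :: real
  assume "\<forall>A::nat. \<exists>N. \<forall>n\<ge>N. real A < partial_reward r n w"
  then obtain N where "\<forall>n\<ge>N. real (nat \<lceil>A\<rceil>) < partial_reward r n w" by blast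
  moreover have "A \<le> real (nat \<lceil>A\<rceil>)" by linarith
  ultimately show "\<exists>N. \<forall>n\<ge>N. A < partial_reward r n w" by force
qed auto

lemma pred_reward_diverges:
  "Measurable.pred (path_space :: (nat \<Rightarrow> 's::finite) measure) (reward_diverges r)"
proof -
  have "Measurable.pred (path_space :: (nat \<Rightarrow> 's) measure)
      (\<lambda>w. \<forall>A::nat. \<exists>N::nat. \<forall>n::nat. N \<le> n \<longrightarrow> real A < partial_reward r n w)"
    by measurable
  then show ?thesis by (simp add: reward_diverges_nat[abs_def])
qed

(* LimInf(=+infinity) is divergence of the partial sums: a liminf is +infinity iff the
   sequence tends to +infinity. *)
lemma LimInf_infty_iff_diverges: "w \<in> LimInf_infty r \<longleftrightarrow> reward_diverges r w"
proof -
  have "w \<in> LimInf_infty r \<longleftrightarrow> (LIM n sequentially. partial_reward r (Suc n) w :> at_top)"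
    unfolding LimInf_infty_def partial_reward_def
    by (simp only: liminf_PInfty[symmetric] tendsto_PInfty_eq_at_top lessThan_Suc_atMost
        mem_Collect_eq of_int_sum)
  also have "\<dots> \<longleftrightarrow> (LIM n sequentially. partial_reward r n w :> at_top)"
    by (rule filterlim_sequentially_Suc)
  finally show ?thesis by (simp only: reward_diverges_def)
qed

(* The process s + S_k + h(w k), frozen at the first time k at which s + S_k <= -a,
   observed at time n. *)
fun stopped_value :: "('s \<Rightarrow> int) \<Rightarrow> ('s \<Rightarrow> real) \<Rightarrow> real \<Rightarrow> nat \<Rightarrow> real \<Rightarrow> (nat \<Rightarrow> 's) \<Rightarrow> real" where
  "stopped_value r h a 0 s w = s + h (w 0)"
| "stopped_value r h a (Suc n) s w = (if s \<le> -a then s + h (w 0)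
     else stopped_value r h a n (s + real_of_int (r (w 0))) (\<lambda>i. w (Suc i)))"

lemma measurable_stopped_value [measurable]:
  "stopped_value r h a n s \<in> borel_measurable (path_space :: (nat \<Rightarrow> 's::finite) measure)"
proof (induction n arbitrary: s)
  case (Suc n)
  have "(\<lambda>w. (\<lambda>y w. stopped_value r h a n (s + real_of_int (r y)) (\<lambda>i. w (Suc i))) (w 0) w)
      \<in> borel_measurable (path_space :: (nat \<Rightarrow> 's) measure)"
    by (rule measurable_compose_countable'[OF _ measurable_path_coord])
       (auto intro: measurable_compose[OF measurable_path_shift Suc.IH])
  moreover have "(\<lambda>w. h (w 0)) \<in> borel_measurable (path_space :: (nat \<Rightarrow> 's) measure)"
    by (rule measurable_path_real)
  ultimately show ?case by (simp add: measurable_If)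
next
  case 0
  have "(\<lambda>w. h (w 0)) \<in> borel_measurable (path_space :: (nat \<Rightarrow> 's) measure)"
    by (rule measurable_path_real)
  then show ?case by simp
qed

lemma stopped_value_unstopped:
  "(\<forall>m\<le>n. -a < s + partial_reward r m w) \<Longrightarrow>
     stopped_value r h a n s w = s + partial_reward r n w + h (w n)"
proof (induction n arbitrary: s w)
  case 0 then show ?case by (simp add: partial_reward_def)
next
  case (Suc n)
  have "\<not> s \<le> -a" using Suc.prems[rule_format, of 0] by (simp add: partial_reward_def)
  moreover have "\<forall>m\<le>n. -a < (s + real_of_int (r (w 0))) + partial_reward r m (\<lambda>i. w (Suc i))"
    using Suc.prems by (auto simp: partial_reward_Suc add.assoc)
  ultimately show ?case using Suc.IH by (simp add: partial_reward_Suc add.assoc)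
qed

(* On a diverging path bounded below by -a the stopped process is never frozen, so it diverges too. *)
lemma stopped_value_tendsto_top:
  assumes C: "\<And>x. \<bar>h x\<bar> \<le> C"
    and diverges: "reward_diverges r w" and above: "\<forall>m. -a < partial_reward r m w"
  shows "LIM n sequentially. stopped_value r h a n 0 w :> at_top"
  unfolding filterlim_at_top
proof
  fix M
  have "eventually (\<lambda>n. M + C \<le> partial_reward r n w) sequentially"
    using diverges unfolding reward_diverges_def filterlim_at_top by blast
  then show "eventually (\<lambda>n. M \<le> stopped_value r h a n 0 w) sequentially"
  proof eventually_elim
    case (elim n)
    have "stopped_value r h a n 0 w = partial_reward r n w + h (w n)"
      using stopped_value_unstopped[of n a 0 r w h] above by simp
    then show ?case using elim C[of "w n"] by linarith
  qed
qed

lemma diverging_bounded_below: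
  assumes r: "\<And>x. -1 \<le> r x" and "reward_diverges r w"
  shows "\<exists>a::nat. \<forall>m. - real a < partial_reward r m w"
proof -
  obtain N where N: "\<And>n. N \<le> n \<Longrightarrow> 0 < partial_reward r n w"
    using assms(2) unfolding reward_diverges_def filterlim_at_top_dense eventually_sequentially by blast
  have "- real (N + 1) < partial_reward r m w" for m
    using N[of m] partial_reward_lower[where r=r and n=m and w=w, OF r] by (cases "N \<le> m") auto
  then show ?thesis by blast
qed

context fixes K :: "'s::finite \<Rightarrow> 's pmf" and r :: "'s \<Rightarrow> int" and h :: "'s \<Rightarrow> real"
  assumes r: "\<And>x. -1 \<le> r x"
    and superharmonic: "\<And>x. real_of_int (r x) + step_mean K h x \<le> h x"
begin

(* Optional stopping in expectation: the shifted stopped process is a nonnegative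
   supermartingale, so its expectation never exceeds its initial value. *)
lemma nn_exp_stopped_value:
  assumes C: "\<And>x. \<bar>h x\<bar> \<le> C" and s: "-a - 1 \<le> s"
  shows "nn_exp K x (\<lambda>w. ennreal (stopped_value r h a n s w + (a + 1 + C)))
           \<le> ennreal (s + h x + (a + 1 + C))"
  using s
proof (induction n arbitrary: s x)
  case 0
  have "nn_exp K x (\<lambda>w. ennreal (stopped_value r h a 0 s w + (a + 1 + C)))
      = nn_exp K x (\<lambda>_. ennreal (s + h x + (a + 1 + C)))"
    unfolding nn_exp_def by simp
  then show ?case by simp
next
  case (Suc n)
  let ?B = "a + 1 + C"
  have m: "(\<lambda>w. ennreal (stopped_value r h a (Suc n) s w + ?B)) \<in> borel_measurable path_space"
    by measurable
  have "nn_exp K x (\<lambda>w. ennreal (stopped_value r h a (Suc n) s w + ?B)) =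
      (\<Sum>y\<in>UNIV. ennreal (pmf (K x) y)
         * nn_exp K y (\<lambda>w. ennreal (stopped_value r h a (Suc n) s (case_nat x w) + ?B)))"
    by (rule nn_exp_first_step[OF m])
  also have "\<dots> \<le> ennreal (s + h x + ?B)"
  proof (cases "s \<le> -a")
    case True
    then show ?thesis by (simp add: sum_distrib_right[symmetric] sum_pmf_UNIV_ennreal)
  next
    case False
    let ?s = "s + real_of_int (r x)"
    have s': "-a - 1 \<le> ?s" using False r[of x] by linarith
    have nonneg: "0 \<le> ?s + h y + ?B" for y using s' C[of y] by linarith
    have "(\<Sum>y\<in>UNIV. ennreal (pmf (K x) y)
           * nn_exp K y (\<lambda>w. ennreal (stopped_value r h a (Suc n) s (case_nat x w) + ?B)))
        = (\<Sum>y\<in>UNIV. ennreal (pmf (K x) y) * nn_exp K y (\<lambda>w. ennreal (stopped_value r h a n ?s w + ?B)))"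
      using False by simp
    also have "\<dots> \<le> (\<Sum>y\<in>UNIV. ennreal (pmf (K x) y) * ennreal (?s + h y + ?B))"
      by (intro sum_mono mult_left_mono Suc.IH s') auto
    also have "\<dots> = ennreal (step_mean K (\<lambda>y. ?s + h y + ?B) x)"
      by (rule ennreal_step_mean[symmetric]) (rule nonneg)
    also have "step_mean K (\<lambda>y. ?s + h y + ?B) x = ?s + ?B + step_mean K h x"
      using step_mean_add_const[where c="?s + ?B" and f=h] by (simp add: algebra_simps)
    also have "\<dots> \<le> s + h x + ?B" using superharmonic[of x] by linarith
    finally show ?thesis by (simp add: ennreal_leI)
  qed
  finally show ?case .
qed

(* By Fatou's lemma, almost surely no run diverges while its reward stays above -a. *)
lemma AE_not_diverges_above:
  "AE \<omega> in noise K. \<not> (reward_diverges r (run t \<omega>) \<and> (\<forall>m. - real a < partial_reward r m (run t \<omega>)))"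
proof -
  obtain C where C: "\<And>x. \<bar>h x\<bar> \<le> C" using finite_abs_bound[of h] by blast
  let ?B = "real a + 1 + C"
  define X where "X n \<omega> = ennreal (stopped_value r h (real a) n 0 (run t \<omega>) + ?B)" for n \<omega>
  have mX: "X n \<in> borel_measurable (noise K)" for n
    unfolding X_def using measurable_compose[OF measurable_run measurable_stopped_value] by measurable
  have "(\<integral>\<^sup>+\<omega>. liminf (\<lambda>n. X n \<omega>) \<partial>noise K) \<le> liminf (\<lambda>n. integral\<^sup>N (noise K) (X n))"
    by (rule nn_integral_liminf) (rule mX)
  also have "\<dots> \<le> ennreal (0 + h t + ?B)"
  proof (rule Liminf_le)
    show "\<forall>\<^sub>F n in sequentially. integral\<^sup>N (noise K) (X n) \<le> ennreal (0 + h t + ?B)"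
      using nn_exp_stopped_value[OF C, of "real a" 0 t] by (simp add: X_def[abs_def] nn_exp_def)
  qed simp
  finally have "(\<integral>\<^sup>+\<omega>. liminf (\<lambda>n. X n \<omega>) \<partial>noise K) \<noteq> \<infinity>" by (auto simp: top_unique)
  then have "AE \<omega> in noise K. liminf (\<lambda>n. X n \<omega>) \<noteq> \<infinity>"
    by (rule nn_integral_PInf_AE[rotated]) (use mX in measurable)
  then show ?thesis
  proof eventually_elim
    case (elim \<omega>)
    show ?case
    proof
      assume "reward_diverges r (run t \<omega>) \<and> (\<forall>m. - real a < partial_reward r m (run t \<omega>))"
      then have "LIM n sequentially. stopped_value r h (real a) n 0 (run t \<omega>) :> at_top"
        by (intro stopped_value_tendsto_top[OF C]) auto
      then have "LIM n sequentially. ?B + stopped_value r h (real a) n 0 (run t \<omega>) :> at_top"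
        by (rule filterlim_tendsto_add_at_top[OF tendsto_const])
      then have "(\<lambda>n. X n \<omega>) \<longlonglongrightarrow> top"
        unfolding X_def by (simp add: ennreal_tendsto_top_eq_at_top add.commute)
      then have "liminf (\<lambda>n. X n \<omega>) = top" by (rule lim_imp_Liminf[OF trivial_limit_sequentially])
      then show False using elim by simp
    qed
  qed
qed

lemma AE_not_diverges: "AE \<omega> in noise K. \<not> reward_diverges r (run t \<omega>)"
proof -
  have "AE \<omega> in noise K. \<forall>a::nat.
      \<not> (reward_diverges r (run t \<omega>) \<and> (\<forall>m. - real a < partial_reward r m (run t \<omega>)))"
    by (subst AE_all_countable) (intro allI AE_not_diverges_above)
  then show ?thesis
    by eventually_elim (use diverging_bounded_below[where r=r, OF r] in blast)
qed

end

lemma exp_le_quadratic: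
  fixes z :: real
  assumes "\<bar>z\<bar> \<le> 1"
  shows "exp z \<le> 1 + z + z\<^sup>2"
proof (cases "0 \<le> z")
  case True then show ?thesis using assms exp_bound by auto
next
  case False
  define y where "y = - z"
  have y: "0 < y" "y \<le> 1" using False assms by (auto simp: y_def)
  have "exp z = inverse (exp y)" by (simp add: y_def exp_minus)
  also have "\<dots> \<le> inverse (1 + y)"
    using y by (intro le_imp_inverse_le) auto
  also have "\<dots> \<le> 1 - y + y\<^sup>2"
  proof -
    have "1 \<le> (1 - y + y\<^sup>2) * (1 + y)"
      using y by (simp add: algebra_simps power2_eq_square power3_eq_cube)
    then show ?thesis using y by (simp add: field_simps)
  qed
  finally show ?thesis by (simp add: y_def)
qed

lemma exp_mean_bound:
  fixes p :: "'s::finite pmf" and d :: "'s \<Rightarrow> real"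
  assumes l: "0 < l" and d: "\<And>y. \<bar>d y\<bar> \<le> C" and lC: "l * C \<le> 1"
  shows "(\<Sum>y\<in>UNIV. pmf p y * exp (- l * d y))
           \<le> 1 - l * (\<Sum>y\<in>UNIV. pmf p y * d y) + l\<^sup>2 * C\<^sup>2"
proof -
  have pointwise: "exp (- l * d y) \<le> 1 - l * d y + l\<^sup>2 * C\<^sup>2" for y
  proof -
    have "\<bar>- l * d y\<bar> = l * \<bar>d y\<bar>" using l by (simp add: abs_mult)
    moreover have "l * \<bar>d y\<bar> \<le> l * C" using l d[of y] by (intro mult_left_mono) auto
    ultimately have small: "\<bar>- l * d y\<bar> \<le> l * C" by simp
    then have "\<bar>- l * d y\<bar>\<^sup>2 \<le> (l * C)\<^sup>2" by (rule power_mono) simp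
    then have "(- l * d y)\<^sup>2 \<le> (l * C)\<^sup>2" by (simp only: power2_abs)
    then show ?thesis using exp_le_quadratic[of "- l * d y"] small lC
      by (simp add: power_mult_distrib)
  qed
  have "(\<Sum>y\<in>UNIV. pmf p y * exp (- l * d y)) \<le> (\<Sum>y\<in>UNIV. pmf p y * (1 - l * d y + l\<^sup>2 * C\<^sup>2))"
    by (intro sum_mono mult_left_mono pointwise) auto
  also have "\<dots> = (\<Sum>y\<in>UNIV. pmf p y * (1 + l\<^sup>2 * C\<^sup>2) - l * (pmf p y * d y))"
    by (intro sum.cong) (simp_all add: algebra_simps)
  also have "\<dots> = (\<Sum>y\<in>UNIV. pmf p y) * (1 + l\<^sup>2 * C\<^sup>2) - l * (\<Sum>y\<in>UNIV. pmf p y * d y)"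
    by (simp only: sum_subtractf sum_distrib_left[symmetric] sum_distrib_right[symmetric])
  finally show ?thesis by (simp add: sum_pmf_UNIV)
qed

lemma exp_contraction_of_drift:
  fixes K :: "'s::finite \<Rightarrow> 's pmf" and r :: "'s \<Rightarrow> int" and phi :: "'s \<Rightarrow> real"
  assumes \<delta>: "0 < \<delta>" and drift: "\<And>x. \<delta> \<le> real_of_int (r x) + step_mean K phi x - phi x"
  shows "\<exists>l rho. 0 < l \<and> rho < 1 \<and>
     (\<forall>x. step_mean K (\<lambda>y. exp (- l * (real_of_int (r x) + phi y - phi x))) x \<le> rho)"
proof -
  define d where "d x y = real_of_int (r x) + phi y - phi x" for x y
  obtain C0 where C0: "\<And>z. \<bar>(\<lambda>(x, y). d x y) z\<bar> \<le> C0" using finite_abs_bound by blast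
  define C where "C = 1 + C0"
  have dC: "\<bar>d x y\<bar> \<le> C" for x y using C0[of "(x, y)"] unfolding C_def by simp
  have "0 \<le> C0" using C0[of undefined] abs_ge_zero[of "d undefined undefined"] by simp
  then have C: "0 < C" unfolding C_def by simp
  define l where "l = min (1 / C) (\<delta> / (2 * C\<^sup>2))"
  have l: "0 < l" using C \<delta> by (simp add: l_def)
  have lC: "l * C \<le> 1" using C by (simp add: l_def min_def field_simps)
  have lC2: "l\<^sup>2 * C\<^sup>2 \<le> l * (\<delta> / 2)"
  proof -
    have "l * C\<^sup>2 \<le> \<delta> / (2 * C\<^sup>2) * C\<^sup>2" using C by (intro mult_right_mono) (auto simp: l_def)
    then have "l * C\<^sup>2 \<le> \<delta> / 2" using C by (simp add: field_simps)
    then show ?thesis using l by (simp add: power2_eq_square mult.assoc mult_left_mono)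
  qed
  have mean_d: "step_mean K (d x) x = real_of_int (r x) + step_mean K phi x - phi x" for x
  proof -
    have "d x = (\<lambda>y. (real_of_int (r x) - phi x) + phi y)" unfolding d_def by (rule ext) simp
    then show ?thesis by (simp only: step_mean_add_const)
  qed
  have "step_mean K (\<lambda>y. exp (- l * d x y)) x \<le> 1 - l * \<delta> / 2" for x
  proof -
    have "step_mean K (\<lambda>y. exp (- l * d x y)) x \<le> 1 - l * step_mean K (d x) x + l\<^sup>2 * C\<^sup>2"
      by (rule exp_mean_bound[OF l dC lC])
    moreover have "l * \<delta> \<le> l * step_mean K (d x) x"
      using l drift[of x] by (simp add: mean_d)
    ultimately show ?thesis using lC2 by linarith
  qed
  moreover have "1 - l * \<delta> / 2 < 1" using l \<delta> by simp
  ultimately show ?thesis using l unfolding d_def by blast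
qed

context fixes K :: "'s::finite \<Rightarrow> 's pmf" and R :: "'s set" and r :: "'s \<Rightarrow> int"
  assumes irr: "irreducible K" and R_nonempty: "R \<noteq> {}"
begin

(* If every excursion has positive mean reward, correcting the potential by a multiple of
   the expected hitting time of R gives a potential with uniformly positive drift. *)
lemma positive_drift_potential:
  assumes pos: "\<forall>u\<in>R. 0 < mu K r R u"
  shows "\<exists>phi \<delta>. 0 < \<delta> \<and> (\<forall>x. \<delta> \<le> real_of_int (r x) + step_mean K phi x - phi x)"
proof -
  define q where "q = hitting_value K R (\<lambda>_. 1)"
  have q_step: "q x = (if x \<in> R then 0 else 1 + step_mean K q x)" for x
    unfolding q_def by (rule hitting_value_step[OF irr R_nonempty]) simp
  obtain M where M: "\<And>x. \<bar>step_mean K q x\<bar> \<le> M"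
    using finite_abs_bound[of "\<lambda>x. step_mean K q x"] by blast
  have M_nonneg: "0 \<le> M" using M[of undefined] by linarith
  define m where "m = Min (mu K r R ` R)"
  have m_pos: "0 < m" unfolding m_def using pos R_nonempty by (subst Min_gr_iff) auto
  have m_le: "m \<le> mu K r R u" if "u \<in> R" for u unfolding m_def using that by (intro Min_le) auto
  define \<delta> where "\<delta> = m / (1 + M)"
  have \<delta>: "0 < \<delta>" "m = \<delta> * (1 + M)" using m_pos M_nonneg by (simp_all add: \<delta>_def)
  define phi where "phi x = potential K R r x - \<delta> * q x" for x
  have "\<delta> \<le> real_of_int (r x) + step_mean K phi x - phi x" for x
  proof -
    have "step_mean K phi x = step_mean K (potential K R r) x - \<delta> * step_mean K q x"
      unfolding phi_def by (rule step_mean_diff_cmult)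
    then have split: "real_of_int (r x) + step_mean K phi x - phi x
        = (if x \<in> R then mu K r R x else 0) - \<delta> * (step_mean K q x - q x)"
      using potential_drift[OF irr R_nonempty, of r x] unfolding phi_def by (simp add: algebra_simps)
    show ?thesis
    proof (cases "x \<in> R")
      case True
      have "\<delta> * step_mean K q x \<le> \<delta> * M" using \<delta> M[of x] by (intro mult_left_mono) auto
      moreover have "real_of_int (r x) + step_mean K phi x - phi x = mu K r R x - \<delta> * step_mean K q x"
        using split True q_step[of x] by simp
      moreover have "m = \<delta> + \<delta> * M" using \<delta>(2) by (simp add: algebra_simps)
      ultimately show ?thesis using m_le[OF True] by linarith
    next
      case False
      then show ?thesis using split q_step[of x] by simp
    qed
  qed
  then show ?thesis using \<delta> by blast
qed

end

context fixes K :: "'s::finite \<Rightarrow> 's pmf" and r :: "'s \<Rightarrow> int" and phi :: "'s \<Rightarrow> real"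
  and l rho :: real
  assumes l: "0 < l" and rho: "rho < 1"
    and contraction: "\<And>x. step_mean K (\<lambda>y. exp (- l * (real_of_int (r x) + phi y - phi x))) x \<le> rho"
begin

definition exp_process :: "nat \<Rightarrow> (nat \<Rightarrow> 's) \<Rightarrow> ennreal" where
  "exp_process n w = ennreal (exp (- l * (partial_reward r n w + phi (w n))))"

lemma measurable_exp_process [measurable]: "exp_process n \<in> borel_measurable path_space"
  unfolding exp_process_def[abs_def] by measurable

lemma rho_nonneg: "0 \<le> rho"
  using contraction[of undefined] by (rule order_trans[rotated]) (auto intro!: sum_nonneg)

lemma exp_step_contraction:
  "exp (- l * real_of_int (r x)) * step_mean K (\<lambda>y. exp (- l * phi y)) x \<le> rho * exp (- l * phi x)"
proof -
  have "exp (- l * real_of_int (r x)) * step_mean K (\<lambda>y. exp (- l * phi y)) x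
      = exp (- l * phi x) * step_mean K (\<lambda>y. exp (- l * (real_of_int (r x) + phi y - phi x))) x"
    unfolding sum_distrib_left
  proof (intro sum.cong refl)
    fix y
    have "exp (- l * real_of_int (r x)) * exp (- l * phi y)
        = exp (- l * phi x) * exp (- l * (real_of_int (r x) + phi y - phi x))"
      by (simp add: exp_add[symmetric] algebra_simps)
    then show "exp (- l * real_of_int (r x)) * (pmf (K x) y * exp (- l * phi y))
        = exp (- l * phi x) * (pmf (K x) y * exp (- l * (real_of_int (r x) + phi y - phi x)))"
      by (metis mult.left_commute)
  qed
  also have "\<dots> \<le> exp (- l * phi x) * rho" using contraction[of x] by (intro mult_left_mono) auto
  finally show ?thesis by (simp add: mult.commute)
qed

lemma nn_exp_exp_process: "nn_exp K x (exp_process n) \<le> ennreal (rho ^ n * exp (- l * phi x))"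
proof (induction n arbitrary: x)
  case 0
  have "nn_exp K x (exp_process 0) = nn_exp K x (\<lambda>_. ennreal (exp (- l * phi x)))"
    unfolding nn_exp_def exp_process_def by (simp add: partial_reward_def)
  then show ?case by simp
next
  case (Suc n)
  let ?c = "exp (- l * real_of_int (r x))"
  have shift: "(\<lambda>w. exp_process (Suc n) (case_nat x w)) = (\<lambda>w. ennreal ?c * exp_process n w)"
    by (rule ext)
       (simp add: exp_process_def partial_reward_Suc_case_nat ennreal_mult[symmetric]
         exp_add[symmetric] algebra_simps)
  have summand: "ennreal (pmf (K x) y) * (ennreal ?c * ennreal (rho ^ n * exp (- l * phi y)))
      = ennreal (rho ^ n * ?c * (pmf (K x) y * exp (- l * phi y)))" for y
    using rho_nonneg by (simp add: ennreal_mult ac_simps)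
  have "nn_exp K x (exp_process (Suc n))
      = (\<Sum>y\<in>UNIV. ennreal (pmf (K x) y) * (ennreal ?c * nn_exp K y (exp_process n)))"
    by (simp add: nn_exp_first_step[OF measurable_exp_process] shift nn_exp_cmult)
  also have "\<dots> \<le> (\<Sum>y\<in>UNIV. ennreal (pmf (K x) y) * (ennreal ?c * ennreal (rho ^ n * exp (- l * phi y))))"
    by (intro sum_mono mult_left_mono Suc.IH) auto
  also have "\<dots> = ennreal (rho ^ n * (?c * step_mean K (\<lambda>y. exp (- l * phi y)) x))"
    using rho_nonneg by (simp only: summand, subst sum_ennreal) (auto simp: sum_distrib_left ac_simps)
  also have "\<dots> \<le> ennreal (rho ^ n * (rho * exp (- l * phi x)))"
    using rho_nonneg exp_step_contraction by (intro ennreal_leI mult_left_mono) auto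
  finally show ?case by (simp add: ac_simps)
qed

lemma diverges_of_summable_exp:
  assumes "summable (\<lambda>n. exp (- l * (partial_reward r n w + phi (w n))))"
  shows "reward_diverges r w"
  unfolding reward_diverges_def filterlim_at_top_dense
proof
  fix A
  obtain Cp where Cp: "\<And>x. \<bar>phi x\<bar> \<le> Cp" using finite_abs_bound by blast
  have "(\<lambda>n. exp (- l * (partial_reward r n w + phi (w n)))) \<longlonglongrightarrow> 0"
    using assms by (rule summable_LIMSEQ_zero)
  then have "eventually (\<lambda>n. exp (- l * (partial_reward r n w + phi (w n))) < exp (- l * (A + Cp))) sequentially"
    by (rule order_tendstoD) simp
  then show "eventually (\<lambda>n. A < partial_reward r n w) sequentially"
  proof eventually_elim
    case (elim n)
    then have "A + Cp < partial_reward r n w + phi (w n)" using l by simp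
    then show ?case using Cp[of "w n"] by linarith
  qed
qed

lemma AE_diverges: "AE \<omega> in noise K. reward_diverges r (run t \<omega>)"
proof -
  have "nn_exp K t (\<lambda>w. \<Sum>n. exp_process n w) = (\<Sum>n. nn_exp K t (exp_process n))"
    by (rule nn_exp_suminf) (rule measurable_exp_process)
  also have "\<dots> \<le> (\<Sum>n. ennreal (rho ^ n * exp (- l * phi t)))"
    by (intro suminf_le nn_exp_exp_process) auto
  also have "\<dots> = ennreal (\<Sum>n. rho ^ n * exp (- l * phi t))"
    using rho_nonneg rho by (intro suminf_ennreal2) (auto intro!: summable_mult2 summable_geometric)
  finally have "nn_exp K t (\<lambda>w. \<Sum>n. exp_process n w) \<noteq> \<infinity>" by (auto simp: top_unique)
  then have "AE \<omega> in noise K. (\<Sum>n. exp_process n (run t \<omega>)) \<noteq> \<infinity>"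
    by (intro AE_finite_of_nn_exp) measurable
  then show ?thesis
  proof eventually_elim
    case (elim \<omega>)
    then show ?case
      by (intro diverges_of_summable_exp summable_suminf_not_top)
         (auto simp: exp_process_def top_unique)
  qed
qed

end

theorem mainTheorem16:
  fixes K :: "'s::finite \<Rightarrow> 's pmf" and r :: "'s \<Rightarrow> int" and R :: "'s set" and t :: 's
  assumes "irreducible K"
    and "\<forall>s. r s \<in> {-1, 0, 1}"
    and "R \<noteq> {}"
    and "t \<in> R"
  shows "((\<forall>u\<in>R. mu K r R u > 0) \<longrightarrow> Prob_from K t (LimInf_infty r) = 1)
       \<and> ((\<forall>u\<in>R. mu K r R u \<le> 0) \<longrightarrow> Prob_from K t (LimInf_infty r) = 0)"
proof -
  interpret prob_space "noise K" by (rule prob_space_noise)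
  have event: "{\<omega> \<in> space (noise K). reward_diverges r (run t \<omega>)} \<in> sets (noise K)"
    using measurable_compose[OF measurable_run[where K=K and t=t] pred_reward_diverges[where r=r]]
    unfolding pred_def by simp
  have prob_eq: "Prob_from K t (LimInf_infty r) = prob {\<omega> \<in> space (noise K). reward_diverges r (run t \<omega>)}"
    by (simp add: Prob_from_def LimInf_infty_iff_diverges)
  show ?thesis
  proof (intro conjI impI)
    assume "\<forall>u\<in>R. 0 < mu K r R u"
    then obtain phi \<delta> where "0 < \<delta>" "\<And>x. \<delta> \<le> real_of_int (r x) + step_mean K phi x - phi x"
      using positive_drift_potential[OF assms(1,3)] by blast
    then obtain l rho where "0 < l" "rho < 1"
      "\<And>x. step_mean K (\<lambda>y. exp (- l * (real_of_int (r x) + phi y - phi x))) x \<le> rho"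
      using exp_contraction_of_drift by blast
    then have "AE \<omega> in noise K. reward_diverges r (run t \<omega>)" by (rule AE_diverges)
    then show "Prob_from K t (LimInf_infty r) = 1" by (simp add: prob_eq prob_Collect_eq_1[OF event])
  next
    assume nonpos: "\<forall>u\<in>R. mu K r R u \<le> 0"
    have "real_of_int (r x) + step_mean K (potential K R r) x \<le> potential K R r x" for x
      using potential_drift[OF assms(1,3), of r x] nonpos by (cases "x \<in> R") auto
    moreover have "-1 \<le> r x" for x using assms(2)[rule_format, of x] by auto
    ultimately have "AE \<omega> in noise K. \<not> reward_diverges r (run t \<omega>)" by (intro AE_not_diverges)
    then show "Prob_from K t (LimInf_infty r) = 0" by (simp add: prob_eq prob_Collect_eq_0[OF event])
  qed
qed

end
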